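(* Let $H$ be a subgroup of finite index in a group $G$. A subset $A\subset H$ is small in $H$ if and only if $A$ is small in $G$.
   Context: A subset $L$ of a group $\Gamma$ is large in $\Gamma$ if there is a finite $F\subset\Gamma$ with $\Gamma=FL$. A subset $A\subset\Gamma$ is small in $\Gamma$ if for every large set $L\subset\Gamma$ the set $L\setminus A$ is large in $\Gamma$. *)

theory Defs
  imports "HOL-Algebra.Coset"
begin

definition large_in :: "('a, 'b) monoid_scheme \<Rightarrow> 'a set \<Rightarrow> bool" where
  "large_in G L \<longleftrightarrow> L \<subseteq> carrier G \<and>
     (\<exists>F. finite F \<and> F \<subseteq> carrier G \<and> carrier G = F <#>\<^bsub>G\<^esub> L)"

definition small_in :: "('a, 'b) monoid_scheme \<Rightarrow> 'a set \<Rightarrow> bool" where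
  "small_in G A \<longleftrightarrow> A \<subseteq> carrier G \<and>
     (\<forall>L. large_in G L \<longrightarrow> large_in G (L - A))"

end

theory Submission
  imports Defs
begin

(* Pick a finite set T \<subseteq> G such that every
   g \<in> G is moved into H by some t \<in> T (that is, G = T\<inverse> H) and T \<inter> H \<subseteq> {1}; such a
   set exists because H has finitely many right cosets.
   For S \<subseteq> H, largeness in H and in G coincide: a finite F with H = F S gives G = T\<inverse> F S,
   and conversely a decomposition h = f s inside H forces f \<in> H.
   The two directions of the theorem then read as follows.
   (\<Leftarrow>) A set L large in H is large in G, so L - A is large in G, hence large in H.
   (\<Rightarrow>) For L large in G, the set L' = H \<inter> T L is large in H, so L' - A is large in H and
   therefore in G.  Since T \<inter> H \<subseteq> {1} and A \<subseteq> H, every element t l of L' - A has l \<notin> A,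
   i.e. L' - A \<subseteq> T (L - A); a set covered by finitely many translates of a large set
   being large, L - A is large in G. *)

lemma finite_set_mult: "finite A \<Longrightarrow> finite B \<Longrightarrow> finite (A <#>\<^bsub>G\<^esub> B)"
  unfolding set_mult_def by simp

lemma (in monoid) large_in_iff:
  "large_in G L \<longleftrightarrow> L \<subseteq> carrier G \<and>
     (\<exists>F. finite F \<and> F \<subseteq> carrier G \<and> (\<forall>g\<in>carrier G. \<exists>f\<in>F. \<exists>l\<in>L. g = f \<otimes> l))"
proof -
  have cover_iff: "carrier G = F <#> L \<longleftrightarrow> (\<forall>g\<in>carrier G. \<exists>f\<in>F. \<exists>l\<in>L. g = f \<otimes> l)"
    if "F \<subseteq> carrier G" "L \<subseteq> carrier G" for F
  proof
    assume "carrier G = F <#> L"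
    then show "\<forall>g\<in>carrier G. \<exists>f\<in>F. \<exists>l\<in>L. g = f \<otimes> l" unfolding set_mult_def by blast
  next
    assume "\<forall>g\<in>carrier G. \<exists>f\<in>F. \<exists>l\<in>L. g = f \<otimes> l"
    then have "carrier G \<subseteq> F <#> L" unfolding set_mult_def by blast
    with set_mult_closed[OF that] show "carrier G = F <#> L" by (rule subset_antisym[rotated])
  qed
  show ?thesis
    unfolding large_in_def by (intro conj_cong[OF refl] ex_cong1 conj_cong refl cover_iff) auto
qed

lemma (in monoid) large_in_carrier: "large_in G (carrier G)"
  unfolding large_in_iff by (intro conjI exI[of _ "{\<one>}"]) auto

text \<open>If a large set is covered by finitely many left translates T N of N, then N is large:
  G = F M \<subseteq> (F T) N.\<close>
lemma (in group) large_in_cancel_translates: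
  assumes "large_in G M" and "finite T" "T \<subseteq> carrier G" "N \<subseteq> carrier G"
    and "M \<subseteq> T <#> N"
  shows "large_in G N"
proof -
  obtain F where F: "finite F" "F \<subseteq> carrier G" "carrier G = F <#> M"
    using assms(1) unfolding large_in_def by blast
  have "carrier G \<subseteq> F <#> (T <#> N)"
    using F(3) mono_set_mult[OF subset_refl assms(5)] by simp
  also have "\<dots> = (F <#> T) <#> N"
    by (rule set_mult_assoc[symmetric, OF F(2) assms(3,4)])
  finally have cover: "carrier G \<subseteq> (F <#> T) <#> N" .
  have FT: "F <#> T \<subseteq> carrier G" by (rule set_mult_closed[OF F(2) assms(3)])
  then have "(F <#> T) <#> N \<subseteq> carrier G" using set_mult_closed assms(4) by blast
  then have "carrier G = (F <#> T) <#> N" using cover by (rule subset_antisym[rotated])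
  moreover have "finite (F <#> T)" by (rule finite_set_mult[OF F(1) assms(2)])
  ultimately show ?thesis using FT assms(4) unfolding large_in_def by blast
qed

definition (in group) reduces_into :: "'a set \<Rightarrow> 'a set \<Rightarrow> bool" where
  "reduces_into H T \<longleftrightarrow> T \<subseteq> carrier G \<and> (\<forall>g\<in>carrier G. \<exists>t\<in>T. t \<otimes> g \<in> H)"

lemma (in group) reduces_into_cover:
  assumes "reduces_into H T" "H \<subseteq> carrier G"
  shows "carrier G \<subseteq> (m_inv G ` T) <#> H"
proof
  fix g assume g: "g \<in> carrier G"
  then obtain t where t: "t \<in> T" "t \<otimes> g \<in> H" and tc: "t \<in> carrier G"
    using assms(1) unfolding reduces_into_def by blast
  have "g = inv t \<otimes> (t \<otimes> g)" using g tc by (simp add: m_assoc[symmetric])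
  then show "g \<in> (m_inv G ` T) <#> H" using t unfolding set_mult_def by blast
qed

text \<open>For a subgroup of finite index there is a finite reducing set meeting H at most in
  the identity: choose one element of every right coset and replace those lying in H
  by the identity.\<close>
lemma (in group) finite_reducing_set_exists:
  assumes sg: "subgroup H G" and fin: "finite (rcosets H)"
  obtains T where "finite T" "reduces_into H T" "T \<inter> H \<subseteq> {\<one>}"
proof -
  have Hc: "H \<subseteq> carrier G" using sg subgroup.subset by blast
  define T0 where "T0 = (\<lambda>C. SOME x. x \<in> C) ` (rcosets H)"
  have T0: "reduces_into H T0"
    unfolding reduces_into_def
  proof (intro conjI ballI)
    have "(SOME x. x \<in> C) \<in> carrier G" if C: "C \<in> rcosets H" for C
    proof -
      obtain a where a: "a \<in> carrier G" "C = H #> a" using C unfolding RCOSETS_def by blast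
      then have "a \<in> C" using rcos_self[OF _ sg] by simp
      then have "(SOME x. x \<in> C) \<in> C" by (rule someI)
      then show ?thesis using subgroup.rcosets_carrier[OF sg is_group C] by blast
    qed
    then show "T0 \<subseteq> carrier G" unfolding T0_def by blast
  next
    fix g assume g: "g \<in> carrier G"
    let ?C = "H #> inv g"
    have "inv g \<in> ?C" using rcos_self[OF _ sg] g by simp
    then have x: "(SOME x. x \<in> ?C) \<in> ?C" by (rule someI)
    have "(SOME x. x \<in> ?C) \<otimes> inv (inv g) \<in> H"
      using subgroup.rcos_module_imp[OF sg is_group _ x] g by simp
    moreover have "?C \<in> rcosets H" using rcosetsI Hc g by simp
    ultimately show "\<exists>t\<in>T0. t \<otimes> g \<in> H" using g unfolding T0_def by auto
  qed
  define T where "T = insert \<one> (T0 - H)"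
  have "reduces_into H T"
    unfolding reduces_into_def
  proof (intro conjI ballI)
    show "T \<subseteq> carrier G" using T0 unfolding T_def reduces_into_def by auto
  next
    fix g assume g: "g \<in> carrier G"
    then obtain t where t: "t \<in> T0" "t \<otimes> g \<in> H" using T0 unfolding reduces_into_def by blast
    show "\<exists>t\<in>T. t \<otimes> g \<in> H"
    proof (cases "t \<in> H")
      case True
      then have "inv t \<otimes> (t \<otimes> g) \<in> H" using t(2) sg by (simp add: subgroup.m_closed subgroup.m_inv_closed)
      then have "\<one> \<otimes> g \<in> H" using True Hc g by (simp add: m_assoc[symmetric] subsetD)
      then show ?thesis unfolding T_def by blast
    qed (use t in \<open>auto simp: T_def\<close>)
  qed
  moreover have "finite T" using fin unfolding T_def T0_def by simp
  moreover have "T \<inter> H \<subseteq> {\<one>}" unfolding T_def by blast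
  ultimately show ?thesis using that by blast
qed

text \<open>A subset of H that is large in G is large in H: in h = f \<otimes> s with h, s \<in> H
  necessarily f \<in> H.  This holds for every subgroup.\<close>
lemma (in group) large_in_subgroup_of_large_in:
  assumes sg: "subgroup H G" and "S \<subseteq> H" "large_in G S"
  shows "large_in (G\<lparr>carrier := H\<rparr>) S"
proof -
  interpret K: group "G\<lparr>carrier := H\<rparr>" using subgroup.subgroup_is_group[OF sg is_group] .
  have Hc: "H \<subseteq> carrier G" using sg subgroup.subset by blast
  obtain F where F: "finite F" "F \<subseteq> carrier G" "\<forall>g\<in>carrier G. \<exists>f\<in>F. \<exists>l\<in>S. g = f \<otimes> l"
    using assms(3) unfolding large_in_iff by blast
  have "\<exists>f\<in>F \<inter> H. \<exists>l\<in>S. h = f \<otimes> l" if hH: "h \<in> H" for h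
  proof -
    obtain f l where fl: "f \<in> F" "l \<in> S" "h = f \<otimes> l" using F(3) hH Hc by blast
    have lc: "f \<in> carrier G" "l \<in> carrier G" using fl F(2) assms(2) Hc by auto
    have "f = h \<otimes> inv l" using fl lc by (simp add: m_assoc)
    then have "f \<in> H" using hH fl(2) assms(2) sg
      by (simp add: subgroup.m_closed subgroup.m_inv_closed subsetD)
    then show ?thesis using fl by blast
  qed
  then show ?thesis unfolding K.large_in_iff using assms(2) F(1) by auto
qed

text \<open>Conversely a subset of H large in H is large in G, provided a finite set reduces
  G into H: H = F S gives G = T\<inverse> F S.\<close>
lemma (in group) large_in_of_large_in_subgroup:
  assumes sg: "subgroup H G" and T: "finite T" "reduces_into H T"
    and "S \<subseteq> H" "large_in (G\<lparr>carrier := H\<rparr>) S"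
  shows "large_in G S"
proof -
  have Hc: "H \<subseteq> carrier G" using sg subgroup.subset by blast
  have Tc: "T \<subseteq> carrier G" using T(2) unfolding reduces_into_def by blast
  obtain F where F: "finite F" "F \<subseteq> H" "H = F <#> S"
    using assms(5) unfolding large_in_def by auto
  have Tinv: "m_inv G ` T \<subseteq> carrier G" and Sc: "S \<subseteq> carrier G" and Fc: "F \<subseteq> carrier G"
    using Tc assms(4) F(2) Hc by auto
  have "carrier G \<subseteq> (m_inv G ` T) <#> (F <#> S)"
    using reduces_into_cover[OF T(2) Hc] F(3) by simp
  also have "\<dots> = ((m_inv G ` T) <#> F) <#> S"
    by (rule set_mult_assoc[symmetric, OF Tinv Fc Sc])
  finally have "carrier G \<subseteq> ((m_inv G ` T) <#> F) <#> S" .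
  moreover have "finite ((m_inv G ` T) <#> F)" using finite_set_mult T(1) F(1) by blast
  moreover have "(m_inv G ` T) <#> F \<subseteq> carrier G" using set_mult_closed[OF Tinv Fc] .
  ultimately show ?thesis
    using large_in_cancel_translates[OF large_in_carrier] Sc by blast
qed

text \<open>For L large in G, the elements of T L that fall into H form a large subset of H:
  write h = f \<otimes> l and choose t with t \<otimes> l \<in> H; then h = (f \<otimes> t\<inverse>) \<otimes> (t \<otimes> l) with
  f \<otimes> t\<inverse> \<in> H.\<close>
lemma (in group) large_in_subgroup_trace:
  assumes sg: "subgroup H G" and T: "finite T" "reduces_into H T" and L: "large_in G L"
  shows "large_in (G\<lparr>carrier := H\<rparr>) (H \<inter> (T <#> L))"
proof -
  interpret K: group "G\<lparr>carrier := H\<rparr>" using subgroup.subgroup_is_group[OF sg is_group] .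
  have Hc: "H \<subseteq> carrier G" using sg subgroup.subset by blast
  have Tc: "T \<subseteq> carrier G" using T(2) unfolding reduces_into_def by blast
  obtain F where F: "finite F" "F \<subseteq> carrier G" "L \<subseteq> carrier G"
    "\<forall>g\<in>carrier G. \<exists>f\<in>F. \<exists>l\<in>L. g = f \<otimes> l"
    using L unfolding large_in_iff by blast
  define E where "E = H \<inter> (\<lambda>(f, t). f \<otimes> inv t) ` (F \<times> T)"
  have "\<exists>e\<in>E. \<exists>y\<in>H \<inter> (T <#> L). h = e \<otimes> y" if hH: "h \<in> H" for h
  proof -
    obtain f l where fl: "f \<in> F" "l \<in> L" "h = f \<otimes> l" using F(4) hH Hc by blast
    obtain t where t: "t \<in> T" "t \<otimes> l \<in> H" using T(2) fl(2) F(3) unfolding reduces_into_def by blast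
    have c: "f \<in> carrier G" "l \<in> carrier G" "t \<in> carrier G" using fl F(2,3) t(1) Tc by auto
    have eq: "h = (f \<otimes> inv t) \<otimes> (t \<otimes> l)" using fl c by (simp add: m_assoc[symmetric]) (simp add: m_assoc)
    then have "f \<otimes> inv t = h \<otimes> inv (t \<otimes> l)" using c by (simp add: m_assoc)
    then have "f \<otimes> inv t \<in> H"
      using hH t(2) sg by (simp add: subgroup.m_closed subgroup.m_inv_closed)
    then have "f \<otimes> inv t \<in> E" using fl(1) t(1) unfolding E_def by auto
    moreover have "t \<otimes> l \<in> H \<inter> (T <#> L)" using t fl(2) unfolding set_mult_def by blast
    ultimately show ?thesis using eq by blast
  qed
  moreover have "finite E" using F(1) T(1) unfolding E_def by simp
  ultimately show ?thesis unfolding K.large_in_iff E_def by auto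
qed

text \<open>Removing A \<subseteq> H from the trace H \<inter> T L only removes products 1 \<otimes> a with a \<in> A,
  because T meets H at most in the identity.\<close>
lemma (in group) trace_minus_subset:
  assumes sg: "subgroup H G" and "T \<subseteq> carrier G" "T \<inter> H \<subseteq> {\<one>}" "L \<subseteq> carrier G" "A \<subseteq> H"
  shows "(H \<inter> (T <#> L)) - A \<subseteq> T <#> (L - A)"
proof
  fix y assume y: "y \<in> (H \<inter> (T <#> L)) - A"
  then obtain t l where tl: "t \<in> T" "l \<in> L" "y = t \<otimes> l" unfolding set_mult_def by blast
  have c: "t \<in> carrier G" "l \<in> carrier G" using tl assms(2,4) by auto
  have "l \<notin> A"
  proof
    assume lA: "l \<in> A"
    have "t = y \<otimes> inv l" using tl c by (simp add: m_assoc)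
    then have "t \<in> H" using lA y assms(5) sg by (auto simp: subgroup.m_closed subgroup.m_inv_closed)
    then have "y = l" using assms(3) tl c by auto
    then show False using y lA by blast
  qed
  then show "y \<in> T <#> (L - A)" using tl unfolding set_mult_def by blast
qed

text \<open>Small in H implies small in G, via the large trace H \<inter> T L of a set L large in G.\<close>
lemma (in group) small_in_of_small_in_subgroup:
  assumes sg: "subgroup H G" and T: "finite T" "reduces_into H T" "T \<inter> H \<subseteq> {\<one>}"
    and A: "A \<subseteq> H" and small: "small_in (G\<lparr>carrier := H\<rparr>) A"
  shows "small_in G A"
  unfolding small_in_def
proof (intro conjI allI impI)
  show "A \<subseteq> carrier G" using A sg subgroup.subset by blast
next
  fix L assume L: "large_in G L"
  have Tc: "T \<subseteq> carrier G" and Lc: "L \<subseteq> carrier G"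
    using T(2) L unfolding reduces_into_def large_in_def by auto
  let ?L' = "H \<inter> (T <#> L)"
  have "large_in (G\<lparr>carrier := H\<rparr>) (?L' - A)"
    using small large_in_subgroup_trace[OF sg T(1,2) L] unfolding small_in_def by blast
  moreover have "?L' - A \<subseteq> H" by blast
  ultimately have large: "large_in G (?L' - A)"
    by (rule large_in_of_large_in_subgroup[OF sg T(1,2), rotated])
  have "L - A \<subseteq> carrier G" using Lc by blast
  then show "large_in G (L - A)"
    by (rule large_in_cancel_translates[OF large T(1) Tc _ trace_minus_subset[OF sg Tc T(3) Lc A]])
qed

text \<open>Small in G implies small in H, since for subsets of H both notions of largeness agree.\<close>
lemma (in group) small_in_subgroup_of_small_in:
  assumes sg: "subgroup H G" and T: "finite T" "reduces_into H T"
    and A: "A \<subseteq> H" and small: "small_in G A"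
  shows "small_in (G\<lparr>carrier := H\<rparr>) A"
  unfolding small_in_def
proof (intro conjI allI impI)
  show "A \<subseteq> carrier (G\<lparr>carrier := H\<rparr>)" using A by simp
next
  fix L assume L: "large_in (G\<lparr>carrier := H\<rparr>) L"
  then have LH: "L \<subseteq> H" unfolding large_in_def by simp
  then have "large_in G (L - A)"
    using small large_in_of_large_in_subgroup[OF sg T LH L] unfolding small_in_def by blast
  then show "large_in (G\<lparr>carrier := H\<rparr>) (L - A)"
    using large_in_subgroup_of_large_in[OF sg] LH by blast
qed

theorem lemma5p7:
  fixes G :: "('a, 'b) monoid_scheme" and H A :: "'a set"
  assumes "group G" and "subgroup H G" and "finite (rcosets\<^bsub>G\<^esub> H)"
    and "A \<subseteq> H"
  shows "small_in (G\<lparr>carrier := H\<rparr>) A \<longleftrightarrow> small_in G A"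
proof -
  obtain T where T: "finite T" "group.reduces_into G H T" "T \<inter> H \<subseteq> {\<one>\<^bsub>G\<^esub>}"
    using group.finite_reducing_set_exists[OF assms(1-3)] by blast
  show ?thesis
    using group.small_in_of_small_in_subgroup[OF assms(1,2) T assms(4)]
      group.small_in_subgroup_of_small_in[OF assms(1,2) T(1,2) assms(4)] by blast
qed

end
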